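(* Let $n>s\geq 1$ be integers and let ${\bm r}=(r_0,\dots,r_s)\in\mathbb{R}^{s+1}$ be such that $g_{\bm r}(x)=\sum_{k=0}^{s} r_k x^k$ is a separable polynomial of degree $s$ (so $r_s\neq 0$) with exactly $\gamma$ real roots ($0\le\gamma\le s$). For $t$ an indeterminate, let $f_{\bm r}(t;x)=x^n+t\,g_{\bm r}(x)\in\mathbb{R}(t)[x]$, and let $$P_{\bm r}(t)=\det M_n\big(f_{\bm r}(t;x),\,f'_{\bm r}(t;x)\big)\in\mathbb{R}[t],$$ where $f'_{\bm r}$ is the derivative with respect to $x$. Let $\alpha_{\bm r}=\max\{\alpha\in\mathbb{R}\mid P_{\bm r}(\alpha)=0\}$. Then for every real $\xi>\alpha_{\bm r}$, the number $N_{f_{\bm r}(\xi;x)}$ of distinct real roots of $f_{\bm r}(\xi;x)=x^n+\xi g_{\bm r}(x)$ equals $$N_{f_{\bm r}(\xi;x)}=\begin{cases}\gamma+1 & \text{if } n-s \text{ is odd},\\ \gamma & \text{if } n-s \text{ is even and } r_s>0,\\ \gamma+2 & \text{if } n-s \text{ is even and } r_s<0.\end{cases}$$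
   Context: Bezoutian: for polynomials $f_1,f_2$ over a field $F$ of characteristic $0$ and an integer $n\ge\max\{\deg f_1,\deg f_2\}$, write $\frac{f_1(x)f_2(y)-f_1(y)f_2(x)}{x-y}=\sum_{i,j=1}^n\alpha_{ij}x^{n-i}y^{n-j}\in F[x,y]$ and set $M_n(f_1,f_2)=(\alpha_{ij})_{1\le i,j\le n}$, a symmetric $n\times n$ matrix. For a real polynomial $h$, $N_h$ denotes the number of distinct real roots of $h$. Note $P_{\bm r}(0)=0$ since $f_{\bm r}(0;x)=x^n$. *)

theory Defs
  imports "HOL-Computational_Algebra.Polynomial" "Jordan_Normal_Form.Determinant"
begin

text \<open>Coefficient of x^p y^q in (f1(x) f2(y) - f1(y) f2(x)) / (x - y).
  Writing f1(x)f2(y) - f1(y)f2(x) = sum d_kl x^k y^l with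
  d_kl = a_k b_l - a_l b_k, the quotient B = sum c_pq x^p y^q satisfies
  d_kl = c_(k-1,l) - c_(k,l-1), hence c_pq = sum_(m=0..q) d_(p+1+m, q-m).\<close>
definition bez_coeff :: "'a::comm_ring_1 poly \<Rightarrow> 'a poly \<Rightarrow> nat \<Rightarrow> nat \<Rightarrow> 'a" where
  "bez_coeff f1 f2 p q =
     (\<Sum>m\<le>q. coeff f1 (p+1+m) * coeff f2 (q-m) - coeff f1 (q-m) * coeff f2 (p+1+m))"

text \<open>Bezoutian M_n(f1,f2) = (alpha_ij)_(1<=i,j<=n), alpha_ij = coefficient of
  x^(n-i) y^(n-j); with 0-based indices i,j < n the entry is the coefficient of
  x^(n-1-i) y^(n-1-j).\<close>
definition bezoutian :: "nat \<Rightarrow> 'a::comm_ring_1 poly \<Rightarrow> 'a poly \<Rightarrow> 'a mat" where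
  "bezoutian n f1 f2 = mat n n (\<lambda>(i,j). bez_coeff f1 f2 (n-1-i) (n-1-j))"

definition num_real_roots :: "real poly \<Rightarrow> nat" where
  "num_real_roots h = card {x::real. poly h x = 0}"

text \<open>f_r(t;x) = x^n + t g_r(x), as a polynomial in x with coefficients in R[t].\<close>
definition f_r :: "nat \<Rightarrow> real poly \<Rightarrow> real poly poly" where
  "f_r n g = monom 1 n + smult [:0, 1:] (map_poly (\<lambda>c. [:c:]) g)"

definition P_r :: "nat \<Rightarrow> real poly \<Rightarrow> real poly" where
  "P_r n g = det (bezoutian n (f_r n g) (pderiv (f_r n g)))"

end

theory Submission
  imports Defs "HOL-Computational_Algebra.Fundamental_Theorem_Algebra"
begin

text \<open>
  Put \<open>f\<^sub>t = x^n + t g\<close> and \<open>q = n g - x g'\<close>. At a root of \<open>f\<^sub>t\<close> one has \<open>x f\<^sub>t' = -t q\<close>, and at a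
  root of \<open>g\<close> one has \<open>x g' = -q\<close>; so at the roots of \<open>f\<^sub>\<xi>\<close> and of \<open>g\<close> the derivative has the
  sign of \<open>-x q(x)\<close>. Between consecutive zeros of \<open>x q(x)\<close> all roots of \<open>f\<^sub>\<xi>\<close>, and all roots of
  \<open>g\<close>, are therefore crossings in one direction, so each polynomial has at most one root
  there, present iff its signs at the end points differ. At a nonzero root \<open>c\<close> of \<open>q\<close> the value
  \<open>c^n + t g(c)\<close> cannot vanish for \<open>t \<ge> \<xi>\<close>, since \<open>c\<close> would be a multiple root of \<open>f\<^sub>t\<close> and
  \<open>P\<^sub>r(t) = 0\<close>; hence \<open>f\<^sub>\<xi>(c)\<close> and \<open>g(c)\<close> have the same sign. So \<open>f\<^sub>\<xi>\<close> and \<open>g\<close> have equally many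
  roots between the extreme zeros of \<open>x q(x)\<close>. Beyond them \<open>g\<close> has no roots, while comparing
  with the signs at infinity shows that \<open>f\<^sub>\<xi>\<close> has one root on the right iff \<open>r\<^sub>s < 0\<close> and one on
  the left iff \<open>(-1)^(n-s) r\<^sub>s < 0\<close>.

  The Bezoutian enters through \<open>(x - b) B(x, b) = f\<^sub>1(x) f\<^sub>2(b) - f\<^sub>1(b) f\<^sub>2(x)\<close> for the Bezoutian
  form \<open>B\<close>: at a common root \<open>b\<close> the vector \<open>(b^(n-1), \<dots>, b, 1)\<close> lies in its kernel, whereas if
  \<open>f\<close> has \<open>n\<close> simple roots \<open>x\<^sub>i\<close>, their Vandermonde matrix makes \<open>M\<^sub>n(f, f')\<close> congruent to
  \<open>diag(f'(x\<^sub>i)^2)\<close>. Regularity at a generic \<open>t\<close> shows \<open>P\<^sub>r \<noteq> 0\<close>.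
\<close>

abbreviation cross_coeff :: "'a::comm_ring_1 poly \<Rightarrow> 'a poly \<Rightarrow> nat \<Rightarrow> nat \<Rightarrow> 'a" where
  "cross_coeff f1 f2 k l \<equiv> coeff f1 k * coeff f2 l - coeff f1 l * coeff f2 k"

lemma sum_antidiagonal_antisym_eq_0:
  fixes e :: "nat \<Rightarrow> nat \<Rightarrow> 'a::field_char_0"
  assumes "\<And>x y. e x y = - e y x"
  shows "(\<Sum>m\<le>N. e m (N - m)) = 0"
proof -
  have "(\<Sum>m\<le>N. e m (N - m)) = (\<Sum>m\<le>N. e (N - m) (N - (N - m)))"
    by (rule sum.reindex_bij_witness[where i="\<lambda>m. N - m" and j="\<lambda>m. N - m"]) auto
  also have "\<dots> = (\<Sum>m\<le>N. - e m (N - m))"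
    by (intro sum.cong) (auto simp: assms[of "N - _"])
  also have "\<dots> = - (\<Sum>m\<le>N. e m (N - m))" by (simp add: sum_negf)
  finally show ?thesis by simp
qed

lemma bez_coeff_0_right: "bez_coeff f1 f2 p 0 = cross_coeff f1 f2 (Suc p) 0"
  by (simp add: bez_coeff_def)

lemma bez_coeff_Suc_right:
  "bez_coeff f1 f2 p (Suc q) = cross_coeff f1 f2 (Suc p) (Suc q) + bez_coeff f1 f2 (Suc p) q"
  unfolding bez_coeff_def by (subst sum.atMost_Suc_shift) simp

lemma bez_coeff_eq_0_left:
  assumes "degree f1 \<le> n" "degree f2 \<le> n" "n \<le> p"
  shows "bez_coeff f1 f2 p q = 0"
  unfolding bez_coeff_def using assms by (intro sum.neutral) (auto simp: coeff_eq_0)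

lemma bez_coeff_0_left:
  fixes f1 f2 :: "'a::field_char_0 poly"
  shows "bez_coeff f1 f2 0 q = - cross_coeff f1 f2 0 (Suc q)"
proof -
  have "(\<Sum>m\<le>Suc q. cross_coeff f1 f2 m (Suc q - m)) = 0"
    by (rule sum_antidiagonal_antisym_eq_0) (simp add: algebra_simps)
  also have "(\<Sum>m\<le>Suc q. cross_coeff f1 f2 m (Suc q - m)) =
      cross_coeff f1 f2 0 (Suc q) + bez_coeff f1 f2 0 q"
    unfolding bez_coeff_def by (subst sum.atMost_Suc_shift) simp
  finally show ?thesis by (metis eq_neg_iff_add_eq_0 add.commute)
qed

lemma bez_coeff_eq_0_right:
  fixes f1 f2 :: "'a::field_char_0 poly"
  assumes "degree f1 \<le> n" "degree f2 \<le> n"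
  shows "bez_coeff f1 f2 p n = 0"
proof (cases "n \<le> p")
  case True
  then show ?thesis using bez_coeff_eq_0_left[OF assms] by blast
next
  case False
  define N where "N = n - p - 1"
  have "bez_coeff f1 f2 p n = (\<Sum>m\<le>N. cross_coeff f1 f2 (p+1+m) (n-m))"
    unfolding bez_coeff_def
  proof (rule sum.mono_neutral_right)
    show "\<forall>i\<in>{..n} - {..N}. cross_coeff f1 f2 (p+1+i) (n-i) = 0"
    proof
      fix i assume "i \<in> {..n} - {..N}"
      then have "degree f1 < p+1+i" "degree f2 < p+1+i" using assms by (auto simp: N_def)
      then show "cross_coeff f1 f2 (p+1+i) (n-i) = 0" by (simp add: coeff_eq_0)
    qed
  qed (auto simp: N_def)
  also have "\<dots> = (\<Sum>m\<le>N. (\<lambda>x y. cross_coeff f1 f2 (p+1+x) (p+1+y)) m (N - m))"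
  proof (intro sum.cong refl)
    fix m assume "m \<in> {..N}"
    then have "n - m = p + 1 + (N - m)" using False by (auto simp: N_def)
    then show "cross_coeff f1 f2 (p+1+m) (n-m) = (\<lambda>x y. cross_coeff f1 f2 (p+1+x) (p+1+y)) m (N - m)"
      by simp
  qed
  also have "\<dots> = 0"
    by (rule sum_antidiagonal_antisym_eq_0) (simp add: algebra_simps)
  finally show ?thesis .
qed

text \<open>The Bezoutian form \<open>(f\<^sub>1(x) f\<^sub>2(y) - f\<^sub>1(y) f\<^sub>2(x)) / (x - y)\<close> at \<open>y = b\<close>, as a polynomial in \<open>x\<close>.\<close>

definition bezout_poly :: "'a::comm_ring_1 poly \<Rightarrow> 'a poly \<Rightarrow> nat \<Rightarrow> 'a \<Rightarrow> 'a poly" where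
  "bezout_poly f1 f2 n b = (\<Sum>p<n. monom (\<Sum>q<n. bez_coeff f1 f2 p q * b^q) p)"

lemma poly_bezout_poly:
  "poly (bezout_poly f1 f2 n b) a = (\<Sum>p<n. (\<Sum>q<n. bez_coeff f1 f2 p q * b^q) * a^p)"
  by (simp add: bezout_poly_def poly_sum poly_monom)

lemma coeff_bezout_poly:
  assumes "degree f1 \<le> n" "degree f2 \<le> n"
  shows "coeff (bezout_poly f1 f2 n b) k = (\<Sum>q<n. bez_coeff f1 f2 k q * b^q)"
proof -
  have "coeff (bezout_poly f1 f2 n b) k =
      (\<Sum>p<n. if p = k then (\<Sum>q<n. bez_coeff f1 f2 p q * b^q) else 0)"
    unfolding bezout_poly_def coeff_sum coeff_monom by (intro sum.cong) auto
  also have "\<dots> = (\<Sum>q<n. bez_coeff f1 f2 k q * b^q)"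
    using bez_coeff_eq_0_left[OF assms] by (auto simp: sum.delta')
  finally show ?thesis .
qed

lemma poly_as_sum_lessThan:
  fixes f :: "'a::comm_ring_1 poly"
  assumes "degree f \<le> n"
  shows "poly f b = (\<Sum>q<Suc n. coeff f q * b^q)"
  unfolding poly_altdef
  by (rule sum.mono_neutral_left) (use assms in \<open>auto simp: coeff_eq_0\<close>)

lemma coeff_bezout_poly_Suc:
  fixes f1 f2 :: "'a::field_char_0 poly"
  assumes "degree f1 \<le> n" "degree f2 \<le> n"
  shows "coeff (bezout_poly f1 f2 n b) p =
     (\<Sum>q<Suc n. cross_coeff f1 f2 (Suc p) q * b^q) + b * coeff (bezout_poly f1 f2 n b) (Suc p)"
proof -
  have "(\<Sum>q<n. bez_coeff f1 f2 p q * b^q) = (\<Sum>q<Suc n. bez_coeff f1 f2 p q * b^q)"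
    using bez_coeff_eq_0_right[OF assms] by simp
  also have "\<dots> = cross_coeff f1 f2 (Suc p) 0 +
      (\<Sum>q<n. (cross_coeff f1 f2 (Suc p) (Suc q) + bez_coeff f1 f2 (Suc p) q) * b^Suc q)"
    by (subst sum.lessThan_Suc_shift) (simp add: bez_coeff_0_right bez_coeff_Suc_right)
  also have "\<dots> = (cross_coeff f1 f2 (Suc p) 0 + (\<Sum>q<n. cross_coeff f1 f2 (Suc p) (Suc q) * b^Suc q))
      + b * (\<Sum>q<n. bez_coeff f1 f2 (Suc p) q * b^q)"
    by (simp add: distrib_right distrib_left sum.distrib sum_distrib_left mult_ac)
  also have "cross_coeff f1 f2 (Suc p) 0 + (\<Sum>q<n. cross_coeff f1 f2 (Suc p) (Suc q) * b^Suc q) =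
      (\<Sum>q<Suc n. cross_coeff f1 f2 (Suc p) q * b^q)"
    by (subst sum.lessThan_Suc_shift) simp
  finally show ?thesis by (simp add: coeff_bezout_poly[OF assms])
qed

lemma coeff_bezout_poly_0:
  fixes f1 f2 :: "'a::field_char_0 poly"
  assumes "degree f1 \<le> n" "degree f2 \<le> n"
  shows "b * coeff (bezout_poly f1 f2 n b) 0 = - (\<Sum>q<Suc n. cross_coeff f1 f2 0 q * b^q)"
proof -
  have "(\<Sum>q<Suc n. cross_coeff f1 f2 0 q * b^q) = (\<Sum>q<n. cross_coeff f1 f2 0 (Suc q) * b^Suc q)"
    by (subst sum.lessThan_Suc_shift) simp
  also have "\<dots> = - (b * (\<Sum>q<n. bez_coeff f1 f2 0 q * b^q))"
    by (simp add: bez_coeff_0_left sum_distrib_left sum_negf[symmetric] algebra_simps)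
  finally show ?thesis by (simp add: coeff_bezout_poly[OF assms])
qed

lemma linear_times_bezout_poly:
  fixes f1 f2 :: "'a::field_char_0 poly"
  assumes "degree f1 \<le> n" "degree f2 \<le> n"
  shows "[:-b, 1:] * bezout_poly f1 f2 n b = smult (poly f2 b) f1 - smult (poly f1 b) f2"
proof (rule poly_eqI)
  fix k
  have rhs: "coeff (smult (poly f2 b) f1 - smult (poly f1 b) f2) k =
      (\<Sum>q<Suc n. cross_coeff f1 f2 k q * b^q)"
    by (simp add: poly_as_sum_lessThan[OF assms(1)] poly_as_sum_lessThan[OF assms(2)]
        sum_distrib_left sum_subtractf[symmetric] algebra_simps)
  have lhs: "[:-b, 1:] * bezout_poly f1 f2 n b =
      smult (-b) (bezout_poly f1 f2 n b) + pCons 0 (bezout_poly f1 f2 n b)"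
    by (simp add: mult_pCons_left)
  show "coeff ([:-b, 1:] * bezout_poly f1 f2 n b) k =
      coeff (smult (poly f2 b) f1 - smult (poly f1 b) f2) k"
  proof (cases k)
    case 0
    then show ?thesis unfolding rhs lhs using coeff_bezout_poly_0[OF assms, of b]
      by (simp del: sum.lessThan_Suc)
  next
    case (Suc p)
    then show ?thesis unfolding rhs lhs using coeff_bezout_poly_Suc[OF assms, of b p] by simp
  qed
qed

lemma poly_bezout_poly_diagonal:
  fixes f1 f2 :: "'a::field_char_0 poly"
  assumes "degree f1 \<le> n" "degree f2 \<le> n"
  shows "poly (bezout_poly f1 f2 n b) b =
    poly (pderiv f1) b * poly f2 b - poly f1 b * poly (pderiv f2) b"
proof -
  have "poly (pderiv ([:-b, 1:] * bezout_poly f1 f2 n b)) b =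
      poly (pderiv (smult (poly f2 b) f1 - smult (poly f1 b) f2)) b"
    by (simp only: linear_times_bezout_poly[OF assms])
  then show ?thesis by (simp add: pderiv_mult pderiv_diff pderiv_smult pderiv_pCons algebra_simps)
qed

definition powers_vec :: "nat \<Rightarrow> 'a::comm_ring_1 \<Rightarrow> 'a vec" where
  "powers_vec n a = vec n (\<lambda>i. a ^ (n - 1 - i))"

lemma bezoutian_carrier_mat: "bezoutian n f1 f2 \<in> carrier_mat n n"
  by (simp add: bezoutian_def)

lemma dim_bezoutian [simp]:
  "dim_row (bezoutian n f1 f2) = n" "dim_col (bezoutian n f1 f2) = n"
  by (simp_all add: bezoutian_def)

lemma bezoutian_mult_powers_vec:
  assumes "i < n"
  shows "(bezoutian n f1 f2 *\<^sub>v powers_vec n b) $ i = (\<Sum>q<n. bez_coeff f1 f2 (n - 1 - i) q * b^q)"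
proof -
  have "(bezoutian n f1 f2 *\<^sub>v powers_vec n b) $ i =
      (\<Sum>j<n. bez_coeff f1 f2 (n - 1 - i) (n - Suc j) * b^(n - Suc j))"
    using assms by (simp add: bezoutian_def powers_vec_def scalar_prod_def atLeast0LessThan)
  also have "\<dots> = (\<Sum>q<n. bez_coeff f1 f2 (n - 1 - i) q * b^q)"
    by (rule sum.nat_diff_reindex)
  finally show ?thesis .
qed

lemma powers_vec_bezoutian_form:
  "powers_vec n a \<bullet> (bezoutian n f1 f2 *\<^sub>v powers_vec n b) = poly (bezout_poly f1 f2 n b) a"
proof -
  have "powers_vec n a \<bullet> (bezoutian n f1 f2 *\<^sub>v powers_vec n b) =
      (\<Sum>i<n. powers_vec n a $ i * (bezoutian n f1 f2 *\<^sub>v powers_vec n b) $ i)"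
    by (simp add: scalar_prod_def atLeast0LessThan del: index_mult_mat_vec)
  also have "\<dots> = (\<Sum>i<n. a^(n - Suc i) * (\<Sum>q<n. bez_coeff f1 f2 (n - Suc i) q * b^q))"
  proof (intro sum.cong refl)
    fix i assume "i \<in> {..<n}"
    then show "powers_vec n a $ i * (bezoutian n f1 f2 *\<^sub>v powers_vec n b) $ i =
        a^(n - Suc i) * (\<Sum>q<n. bez_coeff f1 f2 (n - Suc i) q * b^q)"
      by (subst bezoutian_mult_powers_vec) (auto simp: powers_vec_def)
  qed
  also have "\<dots> = (\<Sum>p<n. a^p * (\<Sum>q<n. bez_coeff f1 f2 p q * b^q))"
    by (rule sum.nat_diff_reindex)
  finally show ?thesis by (simp add: poly_bezout_poly mult.commute)
qed

lemma det_bezoutian_eq_0_if_common_root: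
  fixes f1 f2 :: "'a::field_char_0 poly"
  assumes "degree f1 \<le> n" "degree f2 \<le> n" "1 \<le> n"
    and "poly f1 b = 0" "poly f2 b = 0"
  shows "det (bezoutian n f1 f2) = 0"
proof -
  have "[:-b, 1:] * bezout_poly f1 f2 n b = 0"
    using linear_times_bezout_poly[OF assms(1,2), of b] assms(4,5) by simp
  then have B: "bezout_poly f1 f2 n b = 0"
    by (metis mult_eq_0_iff pCons_eq_0_iff one_neq_zero)
  have "bezoutian n f1 f2 *\<^sub>v powers_vec n b = 0\<^sub>v n"
  proof (rule eq_vecI)
    fix i assume "i < dim_vec (0\<^sub>v n :: 'a vec)"
    then have "i < n" by simp
    then have "(bezoutian n f1 f2 *\<^sub>v powers_vec n b) $ i = coeff (bezout_poly f1 f2 n b) (n - 1 - i)"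
      using bezoutian_mult_powers_vec coeff_bezout_poly[OF assms(1,2)] by simp
    then show "(bezoutian n f1 f2 *\<^sub>v powers_vec n b) $ i = 0\<^sub>v n $ i"
      using B \<open>i < n\<close> by simp
  qed (simp add: bezoutian_def)
  moreover have "powers_vec n b \<noteq> 0\<^sub>v n"
  proof
    assume "powers_vec n b = 0\<^sub>v n"
    then have "powers_vec n b $ (n - 1) = 0" using assms(3) by simp
    then show False using assms(3) by (simp add: powers_vec_def)
  qed
  moreover have "powers_vec n b \<in> carrier_vec n" by (simp add: powers_vec_def)
  ultimately show ?thesis
    using det_0_iff_vec_prod_zero_field[OF bezoutian_carrier_mat] by blast
qed

text \<open>Congruence by the Vandermonde matrix of the roots diagonalises the Bezoutian.\<close>

lemma det_bezoutian_pderiv_neq_0: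
  fixes f :: "'a::field_char_0 poly"
  assumes deg: "degree f \<le> n" and len: "length xs = n" and dist: "distinct xs"
    and roots: "\<And>x. x \<in> set xs \<Longrightarrow> poly f x = 0 \<and> poly (pderiv f) x \<noteq> 0"
  shows "det (bezoutian n f (pderiv f)) \<noteq> 0"
proof -
  let ?B = "bezoutian n f (pderiv f)"
  have deg': "degree (pderiv f) \<le> n" using deg by (simp add: degree_pderiv)
  define V where "V = mat n n (\<lambda>(i,j). (xs!j)^(n-1-i))"
  have V: "V \<in> carrier_mat n n" by (simp add: V_def)
  have B: "?B \<in> carrier_mat n n" by (rule bezoutian_carrier_mat)
  have col_V: "col V j = powers_vec n (xs!j)" if "j < n" for j
    by (rule eq_vecI) (use that in \<open>auto simp: V_def powers_vec_def\<close>)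
  define D where "D = transpose_mat V * (?B * V)"
  have D: "D \<in> carrier_mat n n" using V B by (simp add: D_def)
  have D_entry: "D $$ (i,j) = poly (bezout_poly f (pderiv f) n (xs!j)) (xs!i)"
    if "i < n" "j < n" for i j
  proof -
    have "D $$ (i,j) = row (transpose_mat V) i \<bullet> col (?B * V) j"
      using that V B by (simp add: D_def)
    also have "\<dots> = col V i \<bullet> (?B *\<^sub>v col V j)"
      using that V by (simp add: col_mult2[OF B V])
    also have "\<dots> = poly (bezout_poly f (pderiv f) n (xs!j)) (xs!i)"
      using that by (simp add: col_V powers_vec_bezoutian_form)
    finally show ?thesis .
  qed
  have D_off_diagonal: "D $$ (i,j) = 0" if "i < n" "j < n" "i \<noteq> j" for i j
  proof -
    have "xs!i \<noteq> xs!j" using that dist len by (simp add: nth_eq_iff_index_eq)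
    moreover have "poly f (xs!i) = 0" "poly f (xs!j) = 0" using roots that len by auto
    then have "(xs!i - xs!j) * poly (bezout_poly f (pderiv f) n (xs!j)) (xs!i) = 0"
      using arg_cong[OF linear_times_bezout_poly[OF deg deg', of "xs!j"], of "\<lambda>p. poly p (xs!i)"]
      by (simp add: algebra_simps)
    ultimately show ?thesis using D_entry that by auto
  qed
  have D_diagonal: "D $$ (i,i) \<noteq> 0" if "i < n" for i
    using D_entry[OF that that] poly_bezout_poly_diagonal[OF deg deg', of "xs!i"] roots that len
    by auto
  have "upper_triangular D" using D D_off_diagonal unfolding upper_triangular_def by auto
  then have "det D = prod_list (diag_mat D)" by (rule det_upper_triangular[OF _ D])
  also have "\<dots> \<noteq> 0" using D_diagonal D by (auto simp: diag_mat_def prod_list_zero_iff)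
  finally have "det D \<noteq> 0" .
  moreover have "det D = det (transpose_mat V) * (det ?B * det V)"
    unfolding D_def using V B by (simp add: det_mult[of _ n] mult_carrier_mat)
  ultimately show ?thesis by auto
qed

lemma (in comm_ring_hom) map_mat_bezoutian:
  "map_mat hom (bezoutian n f1 f2) = bezoutian n (map_poly hom f1) (map_poly hom f2)"
  by (rule eq_matI) (auto simp: bezoutian_def bez_coeff_def hom_distribs coeff_map_poly)

lemma (in idom_hom) map_poly_pderiv:
  "map_poly hom (pderiv p) = pderiv (map_poly hom p)"
  by (rule poly_eqI) (simp add: coeff_pderiv coeff_map_poly hom_distribs)

lemma poly_map_poly_of_real:
  "poly (map_poly of_real p) (of_real x) = (of_real (poly p x) :: 'a::{real_algebra_1,comm_semiring_0})"
  by (induction p) (auto simp: map_poly_pCons)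

definition perturbed_monom :: "nat \<Rightarrow> 'a::comm_ring_1 poly \<Rightarrow> 'a \<Rightarrow> 'a poly" where
  "perturbed_monom n g t = monom 1 n + smult t g"

lemma poly_perturbed_monom: "poly (perturbed_monom n g t) x = x^n + t * poly g x"
  by (simp add: perturbed_monom_def poly_monom)

lemma poly_pderiv_perturbed_monom:
  "poly (pderiv (perturbed_monom n g t)) x = of_nat n * x^(n-1) + t * poly (pderiv g) x"
  by (simp add: perturbed_monom_def pderiv_add pderiv_smult pderiv_monom poly_monom)

lemma degree_perturbed_monom:
  assumes "degree g < n"
  shows "degree (perturbed_monom n g t) = n" "lead_coeff (perturbed_monom n g t) = 1"
proof -
  have "degree (smult t g) < degree (monom (1::'a) n)"
    using assms degree_smult_le[of t g] by (simp add: degree_monom_eq)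
  then show deg: "degree (perturbed_monom n g t) = n"
    unfolding perturbed_monom_def by (simp add: degree_add_eq_left degree_monom_eq)
  show "lead_coeff (perturbed_monom n g t) = 1"
    unfolding deg using assms by (simp add: perturbed_monom_def coeff_eq_0)
qed

lemma map_poly_of_real_perturbed_monom:
  "map_poly of_real (perturbed_monom n g t) =
    (perturbed_monom n (map_poly of_real g) (of_real t) :: 'a::{real_algebra_1,comm_ring_1} poly)"
  by (rule poly_eqI) (simp add: perturbed_monom_def coeff_map_poly coeff_monom)

lemma poly_P_r:
  fixes t :: real
  shows "(of_real (poly (P_r n g) t) :: 'a::{real_field, field_char_0}) =
    det (bezoutian n (map_poly of_real (perturbed_monom n g t))
      (pderiv (map_poly of_real (perturbed_monom n g t))))"
proof -
  interpret h: idom_hom "\<lambda>p::real poly. (of_real (poly p t) :: 'a)"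
    by unfold_locales (auto simp: of_real_mult)
  have "map_poly (\<lambda>p::real poly. (of_real (poly p t) :: 'a)) (f_r n g) =
      map_poly of_real (perturbed_monom n g t)"
    by (rule poly_eqI) (auto simp: f_r_def perturbed_monom_def coeff_map_poly coeff_monom)
  then show ?thesis
    unfolding P_r_def h.hom_det[symmetric] h.map_mat_bezoutian h.map_poly_pderiv by simp
qed

lemma poly_P_r_real:
  "poly (P_r n g) t = det (bezoutian n (perturbed_monom n g t) (pderiv (perturbed_monom n g t)))"
  using poly_P_r[where 'a=real, of n g t] by (simp add: map_poly_idI)

lemma sgn_poly_eq_if_no_root_between:
  fixes h :: "real poly"
  assumes "a \<le> b" "\<And>x. a \<le> x \<Longrightarrow> x \<le> b \<Longrightarrow> poly h x \<noteq> 0"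
  shows "sgn (poly h a) = sgn (poly h b)"
proof (rule ccontr)
  assume "sgn (poly h a) \<noteq> sgn (poly h b)"
  moreover have "poly h a \<noteq> 0" "poly h b \<noteq> 0" using assms by auto
  ultimately have "a < b" "poly h a * poly h b < 0"
    using assms(1) by (auto simp: le_less sgn_if mult_less_0_iff split: if_splits)
  then obtain x where "a < x" "x < b" "poly h x = 0" using poly_IVT by blast
  then show False using assms by auto
qed

lemma ex_sgn_poly_near_simple_root:
  fixes h :: "real poly"
  assumes "poly h c = 0" "poly (pderiv h) c \<noteq> 0"
  obtains d where "0 < d"
    "\<And>t. 0 < t \<Longrightarrow> t < d \<Longrightarrow> sgn (poly h (c + t)) = sgn (poly (pderiv h) c)"
    "\<And>t. 0 < t \<Longrightarrow> t < d \<Longrightarrow> sgn (poly h (c - t)) = - sgn (poly (pderiv h) c)"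
proof (cases "poly (pderiv h) c > 0")
  case True
  obtain d1 where "0 < d1" "\<And>t. 0 < t \<Longrightarrow> t < d1 \<Longrightarrow> poly h c < poly h (c + t)"
    using DERIV_pos_inc_right[OF poly_DERIV True] by blast
  moreover obtain d2 where "0 < d2" "\<And>t. 0 < t \<Longrightarrow> t < d2 \<Longrightarrow> poly h (c - t) < poly h c"
    using DERIV_pos_inc_left[OF poly_DERIV True] by blast
  ultimately show ?thesis
    using that[of "min d1 d2"] True assms(1) by auto
next
  case False
  then have neg: "poly (pderiv h) c < 0" using assms(2) by simp
  obtain d1 where "0 < d1" "\<And>t. 0 < t \<Longrightarrow> t < d1 \<Longrightarrow> poly h (c + t) < poly h c"
    using DERIV_neg_dec_right[OF poly_DERIV neg] by blast
  moreover obtain d2 where "0 < d2" "\<And>t. 0 < t \<Longrightarrow> t < d2 \<Longrightarrow> poly h c < poly h (c - t)"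
    using DERIV_neg_dec_left[OF poly_DERIV neg] by blast
  ultimately show ?thesis
    using that[of "min d1 d2"] neg assms(1) by auto
qed

lemma sgn_poly_right_of_simple_root:
  fixes h :: "real poly"
  assumes "poly h c = 0" "poly (pderiv h) c \<noteq> 0" "c < e"
    and "\<And>x. c < x \<Longrightarrow> x \<le> e \<Longrightarrow> poly h x \<noteq> 0"
  shows "sgn (poly h e) = sgn (poly (pderiv h) c)"
proof -
  obtain d where d: "0 < d"
    "\<And>t. 0 < t \<Longrightarrow> t < d \<Longrightarrow> sgn (poly h (c + t)) = sgn (poly (pderiv h) c)"
    using ex_sgn_poly_near_simple_root[OF assms(1,2)] by metis
  define t where "t = min d (e - c) / 2"
  have t: "0 < t" "t < d" "t < e - c" using d(1) assms(3) by (auto simp: t_def)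
  have "sgn (poly h (c + t)) = sgn (poly h e)"
    by (rule sgn_poly_eq_if_no_root_between) (use t assms(4) in auto)
  then show ?thesis using d(2) t by simp
qed

lemma sgn_poly_left_of_simple_root:
  fixes h :: "real poly"
  assumes "poly h c = 0" "poly (pderiv h) c \<noteq> 0" "e < c"
    and "\<And>x. e \<le> x \<Longrightarrow> x < c \<Longrightarrow> poly h x \<noteq> 0"
  shows "sgn (poly h e) = - sgn (poly (pderiv h) c)"
proof -
  obtain d where d: "0 < d"
    "\<And>t. 0 < t \<Longrightarrow> t < d \<Longrightarrow> sgn (poly h (c - t)) = - sgn (poly (pderiv h) c)"
    using ex_sgn_poly_near_simple_root[OF assms(1,2)] by metis
  define t where "t = min d (c - e) / 2"
  have t: "0 < t" "t < d" "t < c - e" using d(1) assms(3) by (auto simp: t_def)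
  have "sgn (poly h e) = sgn (poly h (c - t))"
    by (rule sgn_poly_eq_if_no_root_between) (use t assms(4) in auto)
  then show ?thesis using d(2) t by simp
qed

text \<open>Two consecutive roots crossing in the same direction \<open>\<epsilon>\<close> would force \<open>h\<close> to have sign
  \<open>\<epsilon>\<close> and \<open>-\<epsilon>\<close> at their midpoint.\<close>

lemma root_between_same_direction_unique:
  fixes h :: "real poly" and \<epsilon> :: real
  assumes "h \<noteq> 0" "\<epsilon> \<noteq> 0"
    and dir: "\<And>x. a < x \<Longrightarrow> x < b \<Longrightarrow> poly h x = 0 \<Longrightarrow> sgn (poly (pderiv h) x) = \<epsilon>"
    and u: "a < u" "u < b" "poly h u = 0" and v: "a < v" "v < b" "poly h v = 0"
  shows "u = v"
proof (rule ccontr)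
  define Z where "Z = {x. a < x \<and> x < b \<and> poly h x = 0}"
  have fin: "finite Z" unfolding Z_def
    by (rule finite_subset[OF _ poly_roots_finite[OF assms(1)]]) auto
  have dir_Z: "poly h x = 0" "sgn (poly (pderiv h) x) = \<epsilon>" "poly (pderiv h) x \<noteq> 0"
    if "x \<in> Z" for x
    using that dir[of x] assms(2) by (auto simp: Z_def)
  assume "u \<noteq> v"
  then obtain u v where uv: "u \<in> Z" "v \<in> Z" "u < v"
    using u v by (metis (mono_tags) Z_def linorder_neqE mem_Collect_eq)
  define v0 where "v0 = Min {z \<in> Z. u < z}"
  have "v0 \<in> {z \<in> Z. u < z}" unfolding v0_def using fin uv by (intro Min_in) auto
  moreover have "\<And>z. z \<in> Z \<Longrightarrow> u < z \<Longrightarrow> v0 \<le> z" unfolding v0_def using fin by simp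
  ultimately have v0: "v0 \<in> Z" "u < v0" "\<And>z. z \<in> Z \<Longrightarrow> u < z \<Longrightarrow> v0 \<le> z" by auto
  have between: "poly h x \<noteq> 0" if "u < x" "x < v0" for x
  proof
    assume "poly h x = 0"
    then have "x \<in> Z" using that uv(1) v0(1) by (auto simp: Z_def)
    then show False using v0(3) that by force
  qed
  define m where "m = (u + v0) / 2"
  have m: "u < m" "m < v0" using v0(2) by (auto simp: m_def)
  have "sgn (poly h m) = sgn (poly (pderiv h) u)"
    by (rule sgn_poly_right_of_simple_root) (use uv(1) dir_Z m between in auto)
  moreover have "sgn (poly h m) = - sgn (poly (pderiv h) v0)"
    by (rule sgn_poly_left_of_simple_root) (use v0(1) dir_Z m between in auto)
  ultimately show False using dir_Z[OF uv(1)] dir_Z[OF v0(1)] assms(2) by simp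
qed

lemma card_roots_between_same_direction:
  fixes h :: "real poly" and \<epsilon> :: real
  assumes ab: "a < b" and ha: "poly h a \<noteq> 0" and hb: "poly h b \<noteq> 0" and "\<epsilon> \<noteq> 0"
    and dir: "\<And>x. a < x \<Longrightarrow> x < b \<Longrightarrow> poly h x = 0 \<Longrightarrow> sgn (poly (pderiv h) x) = \<epsilon>"
  shows "card {x. a < x \<and> x < b \<and> poly h x = 0} = (if sgn (poly h a) = sgn (poly h b) then 0 else 1)"
    and "{x. a < x \<and> x < b \<and> poly h x = 0} \<noteq> {} \<Longrightarrow> sgn (poly h b) = \<epsilon>"
proof -
  define Z where "Z = {x. a < x \<and> x < b \<and> poly h x = 0}"
  have "h \<noteq> 0" using ha by auto
  have "u = v" if "u \<in> Z" "v \<in> Z" for u v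
    using root_between_same_direction_unique[OF \<open>h \<noteq> 0\<close> \<open>\<epsilon> \<noteq> 0\<close> dir] that by (auto simp: Z_def)
  then consider "Z = {}" | x where "Z = {x}" by blast
  then have "card Z = (if sgn (poly h a) = sgn (poly h b) then 0 else 1) \<and>
      (Z \<noteq> {} \<longrightarrow> sgn (poly h b) = \<epsilon>)"
  proof cases
    case 1
    have "sgn (poly h a) = sgn (poly h b)"
    proof (rule sgn_poly_eq_if_no_root_between)
      show "poly h x \<noteq> 0" if "a \<le> x" "x \<le> b" for x
        using that ha hb 1 by (cases "x = a \<or> x = b") (auto simp: Z_def)
    qed (use ab in simp)
    then show ?thesis using 1 by simp
  next
    case (2 x)
    then have x: "a < x" "x < b" "poly h x = 0" by (auto simp: Z_def)
    then have dir_x: "sgn (poly (pderiv h) x) = \<epsilon>" "poly (pderiv h) x \<noteq> 0"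
      using dir[of x] \<open>\<epsilon> \<noteq> 0\<close> by auto
    have no_other: "poly h y \<noteq> 0" if "a < y" "y < b" "y \<noteq> x" for y
      using that 2 by (auto simp: Z_def)
    have "sgn (poly h b) = sgn (poly (pderiv h) x)"
    proof (rule sgn_poly_right_of_simple_root[OF x(3) dir_x(2) x(2)])
      show "poly h y \<noteq> 0" if "x < y" "y \<le> b" for y
        using that hb no_other x by (cases "y = b") auto
    qed
    moreover have "sgn (poly h a) = - sgn (poly (pderiv h) x)"
    proof (rule sgn_poly_left_of_simple_root[OF x(3) dir_x(2) x(1)])
      show "poly h y \<noteq> 0" if "a \<le> y" "y < x" for y
        using that ha no_other x by (cases "y = a") auto
    qed
    ultimately show ?thesis using 2 dir_x \<open>\<epsilon> \<noteq> 0\<close> by simp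
  qed
  then show "card {x. a < x \<and> x < b \<and> poly h x = 0} = (if sgn (poly h a) = sgn (poly h b) then 0 else 1)"
    and "{x. a < x \<and> x < b \<and> poly h x = 0} \<noteq> {} \<Longrightarrow> sgn (poly h b) = \<epsilon>"
    by (simp_all add: Z_def)
qed

lemma card_roots_between_weighted:
  fixes h w :: "real poly"
  assumes ab: "a < b" and "poly h a \<noteq> 0" "poly h b \<noteq> 0"
    and w: "\<And>x. a < x \<Longrightarrow> x < b \<Longrightarrow> poly w x \<noteq> 0"
    and cross: "\<And>x. a < x \<Longrightarrow> x < b \<Longrightarrow> poly h x = 0 \<Longrightarrow> 0 < poly (pderiv h) x * poly w x"
    and m: "a < m" "m < b"
  shows "card {x. a < x \<and> x < b \<and> poly h x = 0} = (if sgn (poly h a) = sgn (poly h b) then 0 else 1)"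
    and "{x. a < x \<and> x < b \<and> poly h x = 0} \<noteq> {} \<Longrightarrow> sgn (poly h b) = sgn (poly w m)"
proof -
  have sgn_w: "sgn (poly w x) = sgn (poly w m)" if "a < x" "x < b" for x
  proof (cases "x \<le> m")
    case True
    show ?thesis
      by (rule sgn_poly_eq_if_no_root_between[OF True]) (meson w that m le_less_trans less_le_trans)
  next
    case False
    then have "m \<le> x" by simp
    show ?thesis
      by (rule sgn_poly_eq_if_no_root_between[OF \<open>m \<le> x\<close>, symmetric])
        (meson w that m le_less_trans less_le_trans)
  qed
  have "sgn (poly (pderiv h) x) = sgn (poly w m)" if "a < x" "x < b" "poly h x = 0" for x
  proof -
    have "sgn (poly (pderiv h) x) = sgn (poly w x)"
      using cross[OF that] by (auto simp: zero_less_mult_iff)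
    then show ?thesis using sgn_w[OF that(1,2)] by simp
  qed
  moreover have "sgn (poly w m) \<noteq> 0" using w[OF m] by (simp add: sgn_0_0)
  ultimately show "card {x. a < x \<and> x < b \<and> poly h x = 0} = (if sgn (poly h a) = sgn (poly h b) then 0 else 1)"
    and "{x. a < x \<and> x < b \<and> poly h x = 0} \<noteq> {} \<Longrightarrow> sgn (poly h b) = sgn (poly w m)"
    using card_roots_between_same_direction[OF assms(1-3)] by blast+
qed

lemma sgn_poly_above_roots:
  fixes p :: "real poly"
  assumes "p \<noteq> 0" "\<And>x. poly p x = 0 \<Longrightarrow> x < M"
  shows "sgn (poly p M) = sgn (lead_coeff p)"
proof -
  have pos: "sgn (poly q M) = 1" if lq: "lead_coeff q > 0" and rq: "\<And>x. poly q x = 0 \<Longrightarrow> x < M"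
    for q :: "real poly"
  proof -
    obtain X where X: "\<And>x. x \<ge> X \<Longrightarrow> poly q x \<ge> lead_coeff q"
      using poly_pinfty_gt_lc[OF lq] by blast
    define Y where "Y = max X (M + 1)"
    have "poly q Y > 0" using X[of Y] lq by (simp add: Y_def)
    moreover have "sgn (poly q M) = sgn (poly q Y)"
      by (rule sgn_poly_eq_if_no_root_between) (use rq in \<open>force simp: Y_def\<close>)+
    ultimately show ?thesis by simp
  qed
  show ?thesis
  proof (cases "lead_coeff p > 0")
    case True
    then show ?thesis using pos[of p] assms by simp
  next
    case False
    then have "lead_coeff (-p) > 0" using assms(1) by (simp add: less_le)
    from pos[OF this] show ?thesis using assms False by (auto simp: sgn_minus sgn_if)
  qed
qed

lemma sgn_poly_below_roots:
  fixes p :: "real poly"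
  assumes "p \<noteq> 0" "\<And>x. poly p x = 0 \<Longrightarrow> M < x"
  shows "sgn (poly p M) = (-1)^degree p * sgn (lead_coeff p)"
proof -
  define p' where "p' = pcompose p [:0, -1:]"
  have poly_p': "poly p' x = poly p (-x)" for x by (simp add: p'_def poly_pcompose)
  have "p' \<noteq> 0" using assms(1) by (simp add: p'_def pcompose_eq_0_iff)
  have "lead_coeff p' = lead_coeff p * (-1)^degree p"
    unfolding p'_def by (subst lead_coeff_comp) auto
  moreover have "sgn (poly p' (-M)) = sgn (lead_coeff p')"
    by (rule sgn_poly_above_roots[OF \<open>p' \<noteq> 0\<close>]) (use assms(2) poly_p' in force)
  ultimately show ?thesis using poly_p'[of "-M"] by (simp add: sgn_mult)
qed

lemma ex_bound_abs_roots:
  fixes p :: "real poly"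
  assumes "p \<noteq> 0"
  obtains M where "c < M" "\<And>x. poly p x = 0 \<Longrightarrow> \<bar>x\<bar> < M"
proof -
  define M where "M = Max (insert \<bar>c\<bar> (abs ` {x. poly p x = 0})) + 1"
  have fin: "finite (insert \<bar>c\<bar> (abs ` {x. poly p x = 0}))"
    using poly_roots_finite[OF assms] by simp
  show thesis
  proof (rule that)
    show "c < M" using Max_ge[OF fin, of "\<bar>c\<bar>"] by (simp add: M_def)
    show "\<bar>x\<bar> < M" if "poly p x = 0" for x
      using Max_ge[OF fin, of "\<bar>x\<bar>"] that by (simp add: M_def)
  qed
qed

lemma card_roots_above_weighted:
  fixes h w :: "real poly"
  assumes ha: "poly h a \<noteq> 0" and w: "\<And>x. a < x \<Longrightarrow> poly w x \<noteq> 0"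
    and cross: "\<And>x. a < x \<Longrightarrow> poly h x = 0 \<Longrightarrow> 0 < poly (pderiv h) x * poly w x"
  shows "card {x. a < x \<and> poly h x = 0} = (if sgn (poly h a) = sgn (lead_coeff h) then 0 else 1)"
    and "{x. a < x \<and> poly h x = 0} \<noteq> {} \<Longrightarrow> sgn (lead_coeff h) = sgn (poly w (a + 1))"
proof -
  have "h \<noteq> 0" using ha by auto
  then obtain M where M: "a + 1 < M" "\<And>x. poly h x = 0 \<Longrightarrow> \<bar>x\<bar> < M"
    using ex_bound_abs_roots[where c = "a + 1"] by blast
  have below_M: "x < M" if "poly h x = 0" for x using M(2)[OF that] by linarith
  then have roots: "{x. a < x \<and> poly h x = 0} = {x. a < x \<and> x < M \<and> poly h x = 0}"
    by blast
  have inf: "sgn (poly h M) = sgn (lead_coeff h)"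
    by (rule sgn_poly_above_roots[OF \<open>h \<noteq> 0\<close> below_M])
  have hM: "poly h M \<noteq> 0" using below_M[of M] by auto
  show "card {x. a < x \<and> poly h x = 0} = (if sgn (poly h a) = sgn (lead_coeff h) then 0 else 1)"
    unfolding roots inf[symmetric]
    by (rule card_roots_between_weighted(1)[of a M h w "a + 1"]) (use M(1) ha hM w cross in auto)
  show "{x. a < x \<and> poly h x = 0} \<noteq> {} \<Longrightarrow> sgn (lead_coeff h) = sgn (poly w (a + 1))"
    unfolding roots inf[symmetric]
    by (rule card_roots_between_weighted(2)[of a M h w "a + 1"]) (use M(1) ha hM w cross in auto)
qed

lemma card_roots_below_weighted:
  fixes h w :: "real poly"
  assumes ha: "poly h a \<noteq> 0" and w: "\<And>x. x < a \<Longrightarrow> poly w x \<noteq> 0"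
    and cross: "\<And>x. x < a \<Longrightarrow> poly h x = 0 \<Longrightarrow> 0 < poly (pderiv h) x * poly w x"
  shows "card {x. x < a \<and> poly h x = 0} =
      (if sgn (poly h a) = (-1)^degree h * sgn (lead_coeff h) then 0 else 1)"
    and "{x. x < a \<and> poly h x = 0} \<noteq> {} \<Longrightarrow> sgn (poly h a) = sgn (poly w (a - 1))"
proof -
  have "h \<noteq> 0" using ha by auto
  then obtain M where M: "1 - a < M" "\<And>x. poly h x = 0 \<Longrightarrow> \<bar>x\<bar> < M"
    using ex_bound_abs_roots[where c = "1 - a"] by blast
  have above_M: "-M < x" if "poly h x = 0" for x using M(2)[OF that] by linarith
  then have roots: "{x. x < a \<and> poly h x = 0} = {x. -M < x \<and> x < a \<and> poly h x = 0}"
    by blast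
  have inf: "sgn (poly h (-M)) = (-1)^degree h * sgn (lead_coeff h)"
    by (rule sgn_poly_below_roots[OF \<open>h \<noteq> 0\<close> above_M])
  have hM: "poly h (-M) \<noteq> 0" using above_M[of "-M"] by auto
  have "card {x. -M < x \<and> x < a \<and> poly h x = 0} =
      (if sgn (poly h (-M)) = sgn (poly h a) then 0 else 1)"
    by (rule card_roots_between_weighted(1)[of "-M" a h w "a - 1"]) (use M(1) ha hM w cross in auto)
  then show "card {x. x < a \<and> poly h x = 0} =
      (if sgn (poly h a) = (-1)^degree h * sgn (lead_coeff h) then 0 else 1)"
    unfolding roots inf by argo
  show "{x. x < a \<and> poly h x = 0} \<noteq> {} \<Longrightarrow> sgn (poly h a) = sgn (poly w (a - 1))"
    unfolding roots
    by (rule card_roots_between_weighted(2)[of "-M" a h w "a - 1"]) (use M(1) ha hM w cross in auto)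
qed

lemma card_Icc_split:
  fixes R :: "'a::linorder set"
  assumes "finite R" "hi \<notin> R" "lo \<le> m" "m < hi"
  shows "card (R \<inter> {lo..hi}) = card (R \<inter> {lo..m}) + card (R \<inter> {m<..<hi})"
proof -
  have "R \<inter> {lo..hi} = (R \<inter> {lo..m}) \<union> (R \<inter> {m<..<hi})"
    using assms by (auto simp: less_le)
  then show ?thesis using assms(1) by (subst card_Un_disjoint[symmetric]) auto
qed

lemma card_Icc_Min_Max_eq_if_gaps_eq:
  fixes Z R1 R2 :: "'a::linorder set"
  assumes "finite Z" "Z \<noteq> {}" "finite R1" "finite R2" "\<And>z. z \<in> Z \<Longrightarrow> z \<notin> R1 \<and> z \<notin> R2"
    and "\<And>a b. a \<in> Z \<Longrightarrow> b \<in> Z \<Longrightarrow> a < b \<Longrightarrow> {a<..<b} \<inter> Z = {} \<Longrightarrow>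
           card (R1 \<inter> {a<..<b}) = card (R2 \<inter> {a<..<b})"
  shows "card (R1 \<inter> {Min Z..Max Z}) = card (R2 \<inter> {Min Z..Max Z})"
  using assms(1,2,5,6)
proof (induction "card Z" arbitrary: Z rule: less_induct)
  case less
  define m where "m = Max Z"
  have m: "m \<in> Z" "\<And>z. z \<in> Z \<Longrightarrow> z \<le> m" using less.prems(1,2) by (auto simp: m_def)
  show ?case
  proof (cases "Z = {m}")
    case True
    then show ?thesis using less.prems(3) by (auto simp: Int_absorb2)
  next
    case False
    define Z' where "Z' = Z - {m}"
    define m' where "m' = Max Z'"
    have "finite Z'" using less.prems(1) by (simp add: Z'_def)
    moreover have "Z' \<noteq> {}" using False m(1) by (auto simp: Z'_def)
    moreover have "card Z' < card Z" unfolding Z'_def by (rule card_Diff1_less[OF less.prems(1) m(1)])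
    ultimately have Z': "finite Z'" "Z' \<noteq> {}" "card Z' < card Z" by blast+
    have below_m: "z < m" if "z \<in> Z'" for z using that m(2) by (force simp: Z'_def)
    have m': "m' \<in> Z'" "m' < m" "\<And>z. z \<in> Z' \<Longrightarrow> z \<le> m'"
      using Z' below_m by (auto simp: m'_def)
    have "Z = insert m Z'" using m(1) by (auto simp: Z'_def)
    then have Min_Z: "Min Z = Min Z'"
      using Z' below_m[OF Min_in[OF Z'(1,2)]] by simp
    have IH: "card (R1 \<inter> {Min Z'..m'}) = card (R2 \<inter> {Min Z'..m'})"
      unfolding m'_def
    proof (rule less.hyps[OF Z'(3,1,2)])
      show "\<And>z. z \<in> Z' \<Longrightarrow> z \<notin> R1 \<and> z \<notin> R2" using less.prems(3) by (auto simp: Z'_def)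
      fix a b assume ab: "a \<in> Z'" "b \<in> Z'" "a < b" "{a<..<b} \<inter> Z' = {}"
      have "b < m" using below_m[OF ab(2)] .
      then have "{a<..<b} \<inter> Z = {a<..<b} \<inter> Z'" by (auto simp: Z'_def)
      then have "{a<..<b} \<inter> Z = {}" using ab(4) by simp
      then show "card (R1 \<inter> {a<..<b}) = card (R2 \<inter> {a<..<b})"
        using less.prems(4) ab by (auto simp: Z'_def)
    qed
    have gap: "card (R1 \<inter> {m'<..<m}) = card (R2 \<inter> {m'<..<m})"
      using less.prems(4)[of m' m] m m' by (force simp: Z'_def)
    have "Min Z' \<le> m'" using Z' by (simp add: m'_def)
    then show ?thesis
      using card_Icc_split[OF assms(3), of m "Min Z'" m'] card_Icc_split[OF assms(4), of m "Min Z'" m']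
        less.prems(3)[OF m(1)] m'(2) IH gap by (simp add: Min_Z m_def[symmetric])
  qed
qed

lemma sgn_affine_eq_sgn_slope:
  fixes a b \<xi> :: real
  assumes "b \<noteq> 0" "\<And>t. \<xi> \<le> t \<Longrightarrow> a + t * b \<noteq> 0"
  shows "sgn (a + \<xi> * b) = sgn b"
proof (rule ccontr)
  assume "sgn (a + \<xi> * b) \<noteq> sgn b"
  moreover have "a + \<xi> * b \<noteq> 0" using assms(2) by simp
  ultimately have "(a + \<xi> * b) / b < 0"
    using assms(1) by (auto simp: sgn_if divide_less_0_iff split: if_splits)
  moreover have "a + (-a / b) * b = 0" using assms(1) by simp
  moreover have "(a + \<xi> * b) / b = a / b + \<xi>" using assms(1) by (simp add: field_simps)
  ultimately show False using assms(2)[of "-a / b"] by simp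
qed

lemma ex_less_abs_nonzero:
  fixes A :: "real set"
  assumes "finite A"
  obtains \<delta> where "0 < \<delta>" "\<And>x. x \<in> A \<Longrightarrow> x \<noteq> 0 \<Longrightarrow> \<delta> < \<bar>x\<bar>"
proof
  define B where "B = insert 1 (abs ` (A - {0}))"
  have B: "finite B" "\<And>y. y \<in> B \<Longrightarrow> 0 < y" using assms by (auto simp: B_def)
  show "0 < Min B / 2" using B Min_in[OF B(1)] by (auto simp: B_def)
  show "Min B / 2 < \<bar>x\<bar>" if "x \<in> A" "x \<noteq> 0" for x
    using Min_le[OF B(1), of "\<bar>x\<bar>"] B(2)[of "\<bar>x\<bar>"] that by (auto simp: B_def)
qed

text \<open>Named after Euler's relation \<open>x g' = n g\<close> for \<open>g\<close> homogeneous of degree \<open>n\<close>.\<close>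

definition euler_defect :: "nat \<Rightarrow> 'a::idom poly \<Rightarrow> 'a poly" where
  "euler_defect n g = smult (of_nat n) g - pCons 0 (pderiv g)"

lemma poly_euler_defect: "poly (euler_defect n g) x = of_nat n * poly g x - x * poly (pderiv g) x"
  by (simp add: euler_defect_def)

lemma coeff_euler_defect: "coeff (euler_defect n g) k = (of_nat n - of_nat k) * coeff g k"
  by (cases k) (simp_all add: euler_defect_def coeff_pderiv algebra_simps)

lemma degree_euler_defect:
  fixes g :: "'a::field_char_0 poly"
  assumes "degree g < n"
  shows "degree (euler_defect n g) = degree g"
    and "lead_coeff (euler_defect n g) = (of_nat n - of_nat (degree g)) * lead_coeff g"
proof -
  have "degree (euler_defect n g) \<le> degree g"
    by (rule degree_le) (auto simp: coeff_euler_defect coeff_eq_0)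
  moreover have "coeff (euler_defect n g) (degree g) \<noteq> 0" if "g \<noteq> 0"
    using assms that by (simp add: coeff_euler_defect)
  ultimately show deg: "degree (euler_defect n g) = degree g"
    by (cases "g = 0") (simp_all add: euler_defect_def order.antisym le_degree)
  show "lead_coeff (euler_defect n g) = (of_nat n - of_nat (degree g)) * lead_coeff g"
    by (simp add: deg coeff_euler_defect)
qed

lemma euler_identity_perturbed_monom:
  "x * poly (pderiv (perturbed_monom n g t)) x - of_nat n * poly (perturbed_monom n g t) x =
    - t * poly (euler_defect n g) x"
  by (cases n)
    (simp_all add: poly_perturbed_monom poly_pderiv_perturbed_monom poly_euler_defect algebra_simps)

lemma pderiv_nonzero_if_coprime:
  fixes g :: "'a::field poly"
  assumes "coprime g (pderiv g)" "poly g x = 0"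
  shows "poly (pderiv g) x \<noteq> 0"
proof
  assume "poly (pderiv g) x = 0"
  then have "[:-x, 1:] dvd g" "[:-x, 1:] dvd pderiv g"
    using assms(2) by (simp_all add: poly_eq_0_iff_dvd)
  then have "is_unit [:-x, 1:]" by (intro coprime_common_divisor[OF assms(1)])
  then show False by (simp add: is_unit_iff_degree)
qed

lemma multiple_root_perturbed_monom:
  fixes g :: "'a::field_char_0 poly"
  assumes "2 \<le> n" "t \<noteq> 0" "poly g 0 = 0 \<Longrightarrow> poly (pderiv g) 0 \<noteq> 0"
    and root: "poly (perturbed_monom n g t) z = 0" "poly (pderiv (perturbed_monom n g t)) z = 0"
  shows "poly (euler_defect n g) z = 0" "poly g z \<noteq> 0" "t = - (z^n) / poly g z"
proof -
  show "poly (euler_defect n g) z = 0"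
    using euler_identity_perturbed_monom[of z n g t] root assms(2) by simp
  show g: "poly g z \<noteq> 0"
  proof
    assume "poly g z = 0"
    then have "z = 0" using root(1) by (simp add: poly_perturbed_monom)
    then show False
      using root(2) assms \<open>poly g z = 0\<close> by (simp add: poly_pderiv_perturbed_monom power_0_left)
  qed
  show "t = - (z^n) / poly g z"
    using root(1) g by (simp add: poly_perturbed_monom field_simps eq_neg_iff_add_eq_0)
qed

lemma finite_multiple_root_params:
  fixes g :: "'a::field_char_0 poly"
  assumes "2 \<le> n" "g \<noteq> 0" "degree g < n" "poly g 0 = 0 \<Longrightarrow> poly (pderiv g) 0 \<noteq> 0"
  shows "finite {t. t \<noteq> 0 \<and> (\<exists>z. poly (perturbed_monom n g t) z = 0 \<and>
                                  poly (pderiv (perturbed_monom n g t)) z = 0)}"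
proof (rule finite_subset)
  have "lead_coeff (euler_defect n g) \<noteq> 0"
    using degree_euler_defect(2)[OF assms(3)] assms(2,3) by simp
  then have "euler_defect n g \<noteq> 0" by auto
  then show "finite ((\<lambda>z. - (z^n) / poly g z) ` {z. poly (euler_defect n g) z = 0})"
    using poly_roots_finite by blast
  show "{t. t \<noteq> 0 \<and> (\<exists>z. poly (perturbed_monom n g t) z = 0 \<and>
                          poly (pderiv (perturbed_monom n g t)) z = 0)}
      \<subseteq> (\<lambda>z. - (z^n) / poly g z) ` {z. poly (euler_defect n g) z = 0}"
    using multiple_root_perturbed_monom[OF assms(1) _ assms(4)] by blast
qed

lemma rsquarefree_complex_roots_list:
  fixes p :: "complex poly"
  assumes "rsquarefree p"
  obtains xs where "distinct xs" "length xs = degree p" "set xs = {z. poly p z = 0}"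
proof -
  define R where "R = {z. poly p z = 0}"
  have "p \<noteq> 0" using assms by (simp add: rsquarefree_def)
  then have "finite R" unfolding R_def by (rule poly_roots_finite)
  then obtain xs where xs: "set xs = R" "distinct xs" using finite_distinct_list by blast
  have "smult (lead_coeff p) (\<Prod>z\<in>R. [:-z, 1:]) = p"
    unfolding R_def by (rule complex_poly_decompose_rsquarefree[OF assms])
  then have "degree p = degree (\<Prod>z\<in>R. [:-z, 1:])"
    using \<open>p \<noteq> 0\<close> by (metis degree_smult_eq smult_eq_0_iff)
  also have "\<dots> = card R" by (subst degree_prod_sum_eq) auto
  finally show ?thesis using that[of xs] xs distinct_card[OF xs(2)] by (simp add: R_def)
qed

lemma poly_P_r_eq_0_if_multiple_root:
  fixes g :: "real poly"
  assumes "degree g < n"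
    and "poly (perturbed_monom n g t) x = 0" "poly (pderiv (perturbed_monom n g t)) x = 0"
  shows "poly (P_r n g) t = 0"
  unfolding poly_P_r_real
  using degree_perturbed_monom[OF assms(1)] degree_pderiv[of "perturbed_monom n g t"] assms
  by (intro det_bezoutian_eq_0_if_common_root[of _ n _ x]) auto

lemma P_r_nonzero:
  fixes g :: "real poly"
  assumes "2 \<le> n" "g \<noteq> 0" "degree g < n" "\<And>x. poly g x = 0 \<Longrightarrow> poly (pderiv g) x \<noteq> 0"
  shows "P_r n g \<noteq> 0"
proof -
  define gc where "gc = map_poly (of_real :: real \<Rightarrow> complex) g"
  have gc: "gc \<noteq> 0" "degree gc < n"
    using assms(2,3) by (simp_all add: gc_def degree_map_poly map_poly_eq_0_iff)
  have "poly gc 0 = of_real (poly g 0)" "pderiv gc = map_poly of_real (pderiv g)"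
    using poly_map_poly_of_real[of g 0] by (simp_all add: gc_def of_real_hom.map_poly_pderiv)
  then have gc0: "poly gc 0 = 0 \<Longrightarrow> poly (pderiv gc) 0 \<noteq> 0"
    using assms(4)[of 0] poly_map_poly_of_real[where 'a=complex, of "pderiv g" 0] by simp
  define Bad where "Bad = (of_real :: real \<Rightarrow> complex) -` {t. t \<noteq> 0 \<and>
      (\<exists>z. poly (perturbed_monom n gc t) z = 0 \<and> poly (pderiv (perturbed_monom n gc t)) z = 0)}"
  have "finite Bad" unfolding Bad_def
    by (rule finite_vimageI[OF finite_multiple_root_params[OF assms(1) gc gc0]]) (auto intro: injI)
  define t where "t = Max (insert 0 Bad) + 1"
  have "x \<le> Max (insert 0 Bad)" if "x \<in> insert 0 Bad" for x
    using \<open>finite Bad\<close> that by simp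
  then have t: "0 < t" "t \<notin> Bad" by (force simp: t_def)+
  define F where "F = perturbed_monom n gc (of_real t)"
  have F_eq: "F = map_poly of_real (perturbed_monom n g t)"
    by (simp add: F_def gc_def map_poly_of_real_perturbed_monom)
  have "rsquarefree F"
    using t unfolding rsquarefree_roots F_def Bad_def by auto
  then obtain xs where xs: "distinct xs" "length xs = degree F" "set xs = {z. poly F z = 0}"
    by (rule rsquarefree_complex_roots_list)
  have "degree F = n" using gc(2) by (simp add: F_def degree_perturbed_monom)
  then have "det (bezoutian n F (pderiv F)) \<noteq> 0"
    using \<open>rsquarefree F\<close> xs
    by (intro det_bezoutian_pderiv_neq_0) (auto simp: rsquarefree_roots)
  then have "(of_real (poly (P_r n g) t) :: complex) \<noteq> 0"
    by (simp add: poly_P_r F_eq)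
  then show ?thesis by auto
qed

lemma card_split_three:
  fixes R :: "'a::linorder set"
  assumes "finite R" "lo \<le> hi"
  shows "card R = card (R \<inter> {..<lo}) + card (R \<inter> {lo..hi}) + card (R \<inter> {hi<..})"
proof -
  have "R = (R \<inter> {..<lo}) \<union> (R \<inter> {lo..hi}) \<union> (R \<inter> {hi<..})" by auto
  then have "card R = card ((R \<inter> {..<lo}) \<union> (R \<inter> {lo..hi}) \<union> (R \<inter> {hi<..}))" by simp
  also have "\<dots> = card (R \<inter> {..<lo}) + card (R \<inter> {lo..hi}) + card (R \<inter> {hi<..})"
    using assms by (subst card_Un_disjoint; auto simp: card_Un_disjoint)+
  finally show ?thesis .
qed

locale perturbed_monom_roots =
  fixes n s :: nat and g :: "real poly" and \<xi> :: real
  assumes one_le_s: "1 \<le> s" and s_less_n: "s < n" and degree_g: "degree g = s"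
    and simple_roots_g: "\<And>x. poly g x = 0 \<Longrightarrow> poly (pderiv g) x \<noteq> 0"
    and xi_pos: "0 < \<xi>"
    and no_multiple_roots: "\<And>t x. \<xi> \<le> t \<Longrightarrow> poly (perturbed_monom n g t) x = 0 \<Longrightarrow>
                             poly (pderiv (perturbed_monom n g t)) x \<noteq> 0"
begin

abbreviation f :: "real poly" where "f \<equiv> perturbed_monom n g \<xi>"
abbreviation q :: "real poly" where "q \<equiv> euler_defect n g"

text \<open>At the roots of \<open>f\<close> and of \<open>g\<close> the derivative has the sign of \<open>-x q(x)\<close>.\<close>

abbreviation w :: "real poly" where "w \<equiv> - pCons 0 q"

definition matched :: "real \<Rightarrow> bool" where
  "matched x \<longleftrightarrow> poly g x \<noteq> 0 \<and> sgn (poly f x) = sgn (poly g x)"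

lemma g_nonzero: "g \<noteq> 0"
  using one_le_s degree_g by auto

lemma f_nonzero: "f \<noteq> 0" and degree_f: "degree f = n" and lead_coeff_f: "lead_coeff f = 1"
  using degree_perturbed_monom[of g n \<xi>] degree_g s_less_n by auto

lemma degree_q: "degree q = s" and sgn_lead_coeff_q: "sgn (lead_coeff q) = sgn (lead_coeff g)"
  using degree_euler_defect[of g n] degree_g s_less_n by (auto simp: sgn_mult)

lemma q_nonzero: "q \<noteq> 0"
  using sgn_lead_coeff_q g_nonzero by (auto simp: sgn_0_0)

lemma poly_f_0: "poly f 0 = \<xi> * poly g 0"
  using one_le_s s_less_n by (simp add: poly_perturbed_monom)

lemma crossing_f:
  assumes "poly f x = 0" "poly q x \<noteq> 0"
  shows "0 < poly (pderiv f) x * poly w x"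
proof -
  have "x * poly (pderiv f) x = - \<xi> * poly q x"
    using euler_identity_perturbed_monom[of x n g \<xi>] assms(1) by simp
  moreover have "poly (pderiv f) x * poly w x = - poly q x * (x * poly (pderiv f) x)"
    by (simp add: algebra_simps)
  ultimately have "poly (pderiv f) x * poly w x = \<xi> * (poly q x)^2"
    by (simp add: power2_eq_square)
  then show ?thesis using assms(2) xi_pos by simp
qed

lemma crossing_g:
  assumes "poly g x = 0" "poly q x \<noteq> 0"
  shows "0 < poly (pderiv g) x * poly w x"
proof -
  have "x * poly (pderiv g) x = - poly q x" using assms(1) by (simp add: poly_euler_defect)
  moreover have "poly (pderiv g) x * poly w x = - poly q x * (x * poly (pderiv g) x)"
    by (simp add: algebra_simps)
  ultimately have "poly (pderiv g) x * poly w x = (poly q x)^2"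
    by (simp add: power2_eq_square)
  then show ?thesis using assms(2) by simp
qed

text \<open>Along the ray \<open>t \<ge> \<xi>\<close> the value \<open>f\<^sub>t(c) = c\<^sup>n + t g(c)\<close> cannot vanish, since a root \<open>c\<close> of \<open>f\<^sub>t\<close>
  with \<open>q(c) = 0\<close> would be a multiple root.\<close>

lemma matched_if_euler_root:
  assumes "poly q c = 0" "c \<noteq> 0"
  shows "matched c"
proof -
  have "poly g c \<noteq> 0"
  proof
    assume "poly g c = 0"
    then have "c * poly (pderiv g) c = 0" using assms(1) by (simp add: poly_euler_defect)
    then show False using simple_roots_g[OF \<open>poly g c = 0\<close>] assms(2) by simp
  qed
  moreover have "c^n + t * poly g c \<noteq> 0" if "\<xi> \<le> t" for t
  proof
    assume root: "c^n + t * poly g c = 0"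
    have "c * poly (pderiv (perturbed_monom n g t)) c = 0"
      using euler_identity_perturbed_monom[of c n g t] root assms(1)
      by (simp add: poly_perturbed_monom)
    then show False
      using no_multiple_roots[OF that] root assms(2) by (simp add: poly_perturbed_monom)
  qed
  ultimately show ?thesis
    using sgn_affine_eq_sgn_slope[of "poly g c" \<xi> "c^n"]
    by (simp add: matched_def poly_perturbed_monom)
qed

lemma matched_near_zero:
  assumes "0 < \<delta>" and small: "\<And>x. x \<noteq> 0 \<Longrightarrow> \<bar>x\<bar> \<le> \<delta> \<Longrightarrow> poly f x \<noteq> 0 \<and> poly g x \<noteq> 0"
  shows "matched \<delta>" "matched (-\<delta>)"
proof -
  have "poly g \<delta> \<noteq> 0" "poly g (-\<delta>) \<noteq> 0" using small assms(1) by auto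
  moreover have "sgn (poly f \<delta>) = sgn (poly g \<delta>) \<and> sgn (poly f (-\<delta>)) = sgn (poly g (-\<delta>))"
  proof (cases "poly g 0 = 0")
    case False
    then have nonzero: "poly f x \<noteq> 0 \<and> poly g x \<noteq> 0" if "\<bar>x\<bar> \<le> \<delta>" for x
      using small[of x] that poly_f_0 xi_pos by (cases "x = 0") auto
    have "sgn (poly h 0) = sgn (poly h \<delta>)" "sgn (poly h (-\<delta>)) = sgn (poly h 0)"
      if "h = f \<or> h = g" for h
      using that assms(1) nonzero
      by (auto intro!: sgn_poly_eq_if_no_root_between)
    moreover have "sgn (poly f 0) = sgn (poly g 0)" using poly_f_0 xi_pos by (simp add: sgn_mult)
    ultimately show ?thesis by metis
  next
    case True
    have "poly (pderiv f) 0 = \<xi> * poly (pderiv g) 0"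
      using one_le_s s_less_n by (simp add: poly_pderiv_perturbed_monom power_0_left)
    then have derivs: "sgn (poly (pderiv f) 0) = sgn (poly (pderiv g) 0)"
      "poly (pderiv f) 0 \<noteq> 0" "poly (pderiv g) 0 \<noteq> 0"
      using simple_roots_g[OF True] xi_pos by (auto simp: sgn_mult)
    have roots: "poly f 0 = 0" "poly g 0 = 0" using True poly_f_0 by auto
    have "sgn (poly h \<delta>) = sgn (poly (pderiv h) 0)"
      "sgn (poly h (-\<delta>)) = - sgn (poly (pderiv h) 0)" if "h = f \<or> h = g" for h
      using that roots derivs assms(1) small
      by (auto intro!: sgn_poly_right_of_simple_root sgn_poly_left_of_simple_root)
    then show ?thesis using derivs(1) by metis
  qed
  ultimately show "matched \<delta>" "matched (-\<delta>)" by (simp_all add: matched_def)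
qed

lemma card_roots_gap_eq:
  assumes "a < b" "matched a" "matched b"
    and gap: "\<And>x. a < x \<Longrightarrow> x < b \<Longrightarrow> x \<noteq> 0 \<and> poly q x \<noteq> 0"
  shows "card {x. a < x \<and> x < b \<and> poly f x = 0} = card {x. a < x \<and> x < b \<and> poly g x = 0}"
proof -
  have q_gap: "poly q x \<noteq> 0" and w_nonzero: "poly w x \<noteq> 0" if "a < x" "x < b" for x
    using gap[OF that] by simp_all
  have m: "a < (a + b) / 2" "(a + b) / 2 < b" using assms(1) by auto
  have f_ab: "poly f a \<noteq> 0" "poly f b \<noteq> 0" and g_ab: "poly g a \<noteq> 0" "poly g b \<noteq> 0"
    using assms(2,3) by (auto simp: matched_def sgn_0_0)
  have cross_f: "0 < poly (pderiv f) x * poly w x" if "a < x" "x < b" "poly f x = 0" for x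
    using crossing_f[OF that(3) q_gap[OF that(1,2)]] .
  have cross_g: "0 < poly (pderiv g) x * poly w x" if "a < x" "x < b" "poly g x = 0" for x
    using crossing_g[OF that(3) q_gap[OF that(1,2)]] .
  have "card {x. a < x \<and> x < b \<and> poly f x = 0} = (if sgn (poly f a) = sgn (poly f b) then 0 else 1)"
    by (rule card_roots_between_weighted(1)[of a b f w "(a + b) / 2"])
      (use assms(1) f_ab w_nonzero cross_f m in auto)
  moreover have "card {x. a < x \<and> x < b \<and> poly g x = 0} = (if sgn (poly g a) = sgn (poly g b) then 0 else 1)"
    by (rule card_roots_between_weighted(1)[of a b g w "(a + b) / 2"])
      (use assms(1) g_ab w_nonzero cross_g m in auto)
  ultimately show ?thesis using assms(2,3) by (simp add: matched_def)
qed

lemma right_tail: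
  assumes "0 < a" "matched a" and no_euler_root: "\<And>x. a < x \<Longrightarrow> poly q x \<noteq> 0"
  shows "{x. a < x \<and> poly g x = 0} = {}"
    and "card {x. a < x \<and> poly f x = 0} = (if 0 < lead_coeff g then 0 else 1)"
proof -
  have w: "poly w x \<noteq> 0" if "a < x" for x using no_euler_root[OF that] that assms(1) by simp
  have "sgn (poly q (a + 1)) = sgn (lead_coeff q)"
    by (rule sgn_poly_above_roots[OF q_nonzero]) (use no_euler_root in force)
  then have sgn_w: "sgn (poly w (a + 1)) = - sgn (lead_coeff g)"
    using assms(1) sgn_lead_coeff_q by (simp add: sgn_mult)
  have ga: "poly g a \<noteq> 0" using assms(2) by (simp add: matched_def)
  note g_tail = card_roots_above_weighted[of g a w, OF ga w crossing_g[OF _ no_euler_root]]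
  have lc: "lead_coeff g \<noteq> 0" using g_nonzero by simp
  show empty: "{x. a < x \<and> poly g x = 0} = {}"
    using g_tail(2) sgn_w lc by (auto simp: sgn_0_0)
  then have "sgn (poly g a) = sgn (lead_coeff g)"
    using g_tail(1) by (simp only: card.empty) (simp split: if_splits)
  then have "sgn (poly f a) = sgn (lead_coeff g)" using assms(2) by (simp add: matched_def)
  moreover have "poly f a \<noteq> 0" using assms(2) ga by (auto simp: matched_def sgn_0_0)
  ultimately show "card {x. a < x \<and> poly f x = 0} = (if 0 < lead_coeff g then 0 else 1)"
    using card_roots_above_weighted(1)[of f a w, OF _ w crossing_f[OF _ no_euler_root]] lead_coeff_f lc
    by (auto simp: sgn_if)
qed

lemma left_tail:
  assumes "a < 0" "matched a" and no_euler_root: "\<And>x. x < a \<Longrightarrow> poly q x \<noteq> 0"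
  shows "{x. x < a \<and> poly g x = 0} = {}"
    and "card {x. x < a \<and> poly f x = 0} = (if 0 < (-1)^(n - s) * lead_coeff g then 0 else 1)"
proof -
  define \<sigma> where "\<sigma> = (-1::real)^s * sgn (lead_coeff g)"
  have w: "poly w x \<noteq> 0" if "x < a" for x using no_euler_root[OF that] that assms(1) by simp
  have "sgn (poly q (a - 1)) = (-1)^degree q * sgn (lead_coeff q)"
    by (rule sgn_poly_below_roots[OF q_nonzero]) (use no_euler_root in force)
  then have sgn_w: "sgn (poly w (a - 1)) = \<sigma>"
    using assms(1) sgn_lead_coeff_q degree_q by (simp add: sgn_mult \<sigma>_def)
  have ga: "poly g a \<noteq> 0" using assms(2) by (simp add: matched_def)
  note g_tail = card_roots_below_weighted[of g a w, OF ga w crossing_g[OF _ no_euler_root]]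
  have "finite {x. x < a \<and> poly g x = 0}"
    using poly_roots_finite[OF g_nonzero] by (rule rev_finite_subset) auto
  moreover have g_sign: "sgn (poly g a) = \<sigma> \<longleftrightarrow> card {x. x < a \<and> poly g x = 0} = 0"
    using g_tail(1) degree_g by (simp add: \<sigma>_def)
  ultimately show empty: "{x. x < a \<and> poly g x = 0} = {}"
    using g_tail(2) sgn_w by force
  then have "sgn (poly g a) = \<sigma>" using g_sign by (simp only: card.empty)
  then have "sgn (poly f a) = \<sigma>" using assms(2) by (simp add: matched_def)
  moreover have "poly f a \<noteq> 0" using assms(2) ga by (auto simp: matched_def sgn_0_0)
  moreover have "(\<sigma> = (-1)^n) \<longleftrightarrow> 0 < (-1)^(n - s) * lead_coeff g"
  proof -
    have "(-1::real)^n = (-1)^s * (-1)^(n - s)" using s_less_n by (simp flip: power_add)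
    moreover have "lead_coeff g < 0 \<or> 0 < lead_coeff g"
      using leading_coeff_neq_0[OF g_nonzero] by linarith
    ultimately show ?thesis
      by (cases "even s"; cases "even (n - s)") (auto simp: \<sigma>_def sgn_if)
  qed
  ultimately show "card {x. x < a \<and> poly f x = 0} = (if 0 < (-1)^(n - s) * lead_coeff g then 0 else 1)"
    using card_roots_below_weighted(1)[of f a w, OF _ w crossing_f[OF _ no_euler_root]]
      lead_coeff_f degree_f
    by simp
qed

text \<open>The nonzero roots of \<open>q\<close> together with \<open>\<plusminus>\<delta>\<close> cut the line into gaps on which \<open>f\<close> and \<open>g\<close>
  have equally many roots; \<open>\<delta>\<close> isolates \<open>0\<close>, the one zero of \<open>x q(x)\<close> where signs need not match.\<close>

lemma card_roots_middle_eq: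
  assumes "0 < \<delta>" "matched \<delta>" "matched (-\<delta>)"
    and small: "\<And>x. x \<noteq> 0 \<Longrightarrow> \<bar>x\<bar> \<le> \<delta> \<Longrightarrow> poly q x \<noteq> 0 \<and> poly f x \<noteq> 0 \<and> poly g x \<noteq> 0"
  defines "Z \<equiv> {x. poly q x = 0 \<and> x \<noteq> 0} \<union> {-\<delta>, \<delta>}"
  shows "card ({x. poly f x = 0} \<inter> {Min Z..Max Z}) = card ({x. poly g x = 0} \<inter> {Min Z..Max Z})"
proof (rule card_Icc_Min_Max_eq_if_gaps_eq)
  have matched: "matched z" if "z \<in> Z" for z
    using that assms(2,3) matched_if_euler_root by (auto simp: Z_def)
  have far: "\<delta> < \<bar>z\<bar>" if "z \<in> Z" "z \<noteq> \<delta>" "z \<noteq> -\<delta>" for z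
    using that small[of z] by (force simp: Z_def)
  show "finite Z" using poly_roots_finite[OF q_nonzero] by (simp add: Z_def)
  show "Z \<noteq> {}" by (simp add: Z_def)
  show "finite {x. poly f x = 0}" by (rule poly_roots_finite[OF f_nonzero])
  show "finite {x. poly g x = 0}" by (rule poly_roots_finite[OF g_nonzero])
  show "z \<notin> {x. poly f x = 0} \<and> z \<notin> {x. poly g x = 0}" if "z \<in> Z" for z
    using matched[OF that] by (auto simp: matched_def sgn_0_0)
  fix a b assume ab: "a \<in> Z" "b \<in> Z" "a < b" "{a<..<b} \<inter> Z = {}"
  show "card ({x. poly f x = 0} \<inter> {a<..<b}) = card ({x. poly g x = 0} \<inter> {a<..<b})"
  proof (cases "a < 0 \<and> 0 < b")
    case True
    have "-\<delta> \<notin> {a<..<b}" "\<delta> \<notin> {a<..<b}" using ab(4) by (auto simp: Z_def)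
    then have "a = -\<delta>" "b = \<delta>" using far[OF ab(1)] far[OF ab(2)] True assms(1) by auto
    moreover have "poly f x = 0 \<longleftrightarrow> poly g x = 0" if "\<bar>x\<bar> < \<delta>" for x
      using small[of x] that poly_f_0 xi_pos by (cases "x = 0") auto
    ultimately have "{x. poly f x = 0} \<inter> {a<..<b} = {x. poly g x = 0} \<inter> {a<..<b}"
      by (auto simp: abs_less_iff)
    then show ?thesis by simp
  next
    case False
    have "x \<noteq> 0 \<and> poly q x \<noteq> 0" if "a < x" "x < b" for x
      using that False ab(4) by (auto simp: Z_def)
    then have "card {x. a < x \<and> x < b \<and> poly f x = 0} = card {x. a < x \<and> x < b \<and> poly g x = 0}"
      using card_roots_gap_eq[OF ab(3) matched[OF ab(1)] matched[OF ab(2)]] by blast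
    moreover have "{x. poly p x = 0} \<inter> {a<..<b} = {x. a < x \<and> x < b \<and> poly p x = 0}" for p :: "real poly"
      by auto
    ultimately show ?thesis by simp
  qed
qed

lemma ex_isolating_radius:
  obtains \<delta> where "0 < \<delta>" "matched \<delta>" "matched (-\<delta>)"
    "\<And>x. x \<noteq> 0 \<Longrightarrow> \<bar>x\<bar> \<le> \<delta> \<Longrightarrow> poly q x \<noteq> 0 \<and> poly f x \<noteq> 0 \<and> poly g x \<noteq> 0"
proof -
  obtain \<delta> where \<delta>: "0 < \<delta>" "\<And>x. x \<in> {x. poly f x = 0} \<union> {x. poly g x = 0} \<union> {x. poly q x = 0} \<Longrightarrow>
      x \<noteq> 0 \<Longrightarrow> \<delta> < \<bar>x\<bar>"
    using poly_roots_finite[OF f_nonzero] poly_roots_finite[OF g_nonzero] poly_roots_finite[OF q_nonzero]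
    by (metis ex_less_abs_nonzero finite_Un)
  have small: "poly q x \<noteq> 0 \<and> poly f x \<noteq> 0 \<and> poly g x \<noteq> 0" if "x \<noteq> 0" "\<bar>x\<bar> \<le> \<delta>" for x
    using \<delta>(2)[of x] that by force
  then have "matched \<delta>" "matched (-\<delta>)" using matched_near_zero[OF \<delta>(1)] by blast+
  then show thesis using that \<delta>(1) small by blast
qed

theorem card_roots_f:
  "card {x. poly f x = 0} = card {x. poly g x = 0}
     + (if 0 < lead_coeff g then 0 else 1) + (if 0 < (-1)^(n - s) * lead_coeff g then 0 else 1)"
proof -
  obtain \<delta> where \<delta>: "0 < \<delta>" "matched \<delta>" "matched (-\<delta>)"
    and small: "\<And>x. x \<noteq> 0 \<Longrightarrow> \<bar>x\<bar> \<le> \<delta> \<Longrightarrow> poly q x \<noteq> 0 \<and> poly f x \<noteq> 0 \<and> poly g x \<noteq> 0"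
    using ex_isolating_radius by blast
  define Z where "Z = {x. poly q x = 0 \<and> x \<noteq> 0} \<union> {-\<delta>, \<delta>}"
  have fin: "finite Z" using poly_roots_finite[OF q_nonzero] by (simp add: Z_def)
  have "-\<delta> \<in> Z" "\<delta> \<in> Z" by (simp_all add: Z_def)
  then have Z_bounds: "Min Z \<le> -\<delta>" "\<delta> \<le> Max Z" "\<And>z. z \<in> Z \<Longrightarrow> Min Z \<le> z \<and> z \<le> Max Z"
    using fin by auto
  have matched_Z: "matched (Min Z)" "matched (Max Z)"
    using Min_in[OF fin] Max_in[OF fin] \<delta>(2,3) matched_if_euler_root
    by (auto simp: Z_def)
  have outside: "poly q x \<noteq> 0" if "x < Min Z \<or> Max Z < x" for x
  proof
    assume "poly q x = 0"
    moreover have "x \<noteq> 0" using that Z_bounds(1,2) \<delta>(1) by auto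
    ultimately have "x \<in> Z" by (simp add: Z_def)
    then show False using that Z_bounds(3) by force
  qed
  have "Min Z < 0" "0 < Max Z" using Z_bounds(1,2) \<delta>(1) by auto
  note left = left_tail[OF \<open>Min Z < 0\<close> matched_Z(1)] and right = right_tail[OF \<open>0 < Max Z\<close> matched_Z(2)]
  have "card {x. poly f x = 0} = card ({x. poly f x = 0} \<inter> {..<Min Z})
      + card ({x. poly f x = 0} \<inter> {Min Z..Max Z}) + card ({x. poly f x = 0} \<inter> {Max Z<..})"
    by (rule card_split_three[OF poly_roots_finite[OF f_nonzero]]) (use Z_bounds \<delta>(1) in linarith)
  moreover have "card {x. poly g x = 0} = card ({x. poly g x = 0} \<inter> {..<Min Z})
      + card ({x. poly g x = 0} \<inter> {Min Z..Max Z}) + card ({x. poly g x = 0} \<inter> {Max Z<..})"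
    by (rule card_split_three[OF poly_roots_finite[OF g_nonzero]]) (use Z_bounds \<delta>(1) in linarith)
  moreover have "card ({x. poly f x = 0} \<inter> {Min Z..Max Z}) = card ({x. poly g x = 0} \<inter> {Min Z..Max Z})"
    unfolding Z_def using card_roots_middle_eq \<delta> small by blast
  ultimately show ?thesis
    using left[OF outside] right[OF outside] by (simp add: Int_def conj_commute)
qed

end

theorem theorem5p2:
  fixes n s \<gamma> :: nat and g :: "real poly" and \<xi> :: real
  assumes "1 \<le> s" and "s < n"
    and "degree g = s"
    and "coprime g (pderiv g)"
    and "\<gamma> = num_real_roots g"
    and "\<xi> > Max {\<alpha>::real. poly (P_r n g) \<alpha> = 0}"
  shows "num_real_roots (monom 1 n + smult \<xi> g) =
           (if odd (n - s) then \<gamma> + 1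
            else if lead_coeff g > 0 then \<gamma> else \<gamma> + 2)"
proof -
  have simple: "\<And>x. poly g x = 0 \<Longrightarrow> poly (pderiv g) x \<noteq> 0"
    using pderiv_nonzero_if_coprime[OF assms(4)] .
  have "g \<noteq> 0" "2 \<le> n" "degree g < n" using assms(1-3) by auto
  then have "finite {\<alpha>. poly (P_r n g) \<alpha> = 0}"
    using poly_roots_finite P_r_nonzero simple by blast
  then have above_Max: "poly (P_r n g) t \<noteq> 0" if "\<xi> \<le> t" for t
    using Max_ge[of "{\<alpha>. poly (P_r n g) \<alpha> = 0}" t] that assms(6) by fastforce
  note P_r_root = poly_P_r_eq_0_if_multiple_root[OF \<open>degree g < n\<close>]
  have "poly (P_r n g) 0 = 0"
    by (rule P_r_root[of 0 0])
      (use \<open>2 \<le> n\<close> in \<open>simp_all add: poly_perturbed_monom poly_pderiv_perturbed_monom power_0_left\<close>)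
  then have "0 < \<xi>" using above_Max[of 0] by (metis not_le)
  then interpret perturbed_monom_roots n s g \<xi>
    using assms(1-3) simple above_Max P_r_root by unfold_locales blast+
  show ?thesis
    using card_roots_f assms(5) \<open>g \<noteq> 0\<close>
    by (auto simp: num_real_roots_def perturbed_monom_def zero_less_mult_iff)
qed

end
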